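(* Let $f:\mathbb{R}^d\to\mathbb{R}$ be differentiable with $L$-Lipschitz gradient ($L>0$) and bounded below, and let $f^*=\inf_{\vec x} f(\vec x)>-\infty$. Consider single-step SGD iterations (as defined in the context) with constant learning rate $\alpha=1/\sqrt{T}$, where $T\ge 36L^2$ is the number of iterations, and assume they satisfy elastic consistency with constant $B$. Then $$\min_{t\in\{0,\dots,T-1\}}\mathbb{E}\|\nabla f(\vec x_t)\|^2\le \frac{4(f(\vec x_0)-f^* )}{\sqrt T}+\frac{2B^2L^2}{T}+\frac{6L\sigma^2}{\sqrt T}+\frac{6L^3B^2}{T\sqrt T}.$$
   Context: All random objects live on a probability space with a filtration $(\mathcal F_t)_{t\ge0}$. Single-step SGD iterations: $\vec x_0\in\mathbb{R}^d$ is deterministic. At each iteration $t\ge0$ some processor $i=i_t$ (chosen independently of the algorithm's randomness) holds a view $\vec v_t^{i}\in\mathbb{R}^d$. The vectors $\vec x_t$ and $\vec v_t^{i}$ are $\mathcal F_t$-measurable, and the processor computes a stochastic gradient $\tilde G(\vec v_t^{i})$, which is $\mathcal F_{t+1}$-measurable and satisfies $\mathbb{E}[\tilde G(\vec v_t^{i})\mid\mathcal F_t]=\nabla f(\vec v_t^{i})$ and $\mathbb{E}[\|\tilde G(\vec v_t^{i})-\nabla f(\vec v_t^{i})\|^2\mid\mathcal F_t]\le\sigma^2$. The global parameter is updated by $\vec x_{t+1}=\vec x_t-\alpha\tilde G(\vec v_t^{i})$. Elastic consistency with constant $B>0$ (independent of $t$) means that $\mathbb{E}\|\vec x_t-\vec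 v_t^{i}\|^2\le\alpha^2B^2$ for every iteration $t$ and the processor $i$ acting at $t$. Norms are Euclidean. *)

theory Defs
  imports "HOL-Probability.Probability"
begin

end

theory Submission
  imports Defs
begin

text \<open>By the descent lemma, one step of SGD decreases \<open>f\<close> by \<open>\<alpha> \<langle>\<nabla>f(x\<^sub>t), G\<^sub>t\<rangle>\<close> up to
  \<open>L \<alpha>\<^sup>2 \<parallel>G\<^sub>t\<parallel>\<^sup>2\<close>. Write \<open>G\<^sub>t = \<nabla>f(v\<^sub>t) + e\<^sub>t\<close>. Since \<open>x\<^sub>t\<close> is \<open>\<F>\<^sub>t\<close>-measurable and \<open>G\<^sub>t\<close> is
  conditionally unbiased, \<open>\<langle>\<nabla>f(x\<^sub>t), e\<^sub>t\<rangle>\<close> has mean zero; polarisation gives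
  \<open>2\<langle>\<nabla>f(x\<^sub>t), \<nabla>f(v\<^sub>t)\<rangle> \<ge> \<parallel>\<nabla>f(x\<^sub>t)\<parallel>\<^sup>2 + \<parallel>\<nabla>f(v\<^sub>t)\<parallel>\<^sup>2 - L\<^sup>2\<parallel>x\<^sub>t - v\<^sub>t\<parallel>\<^sup>2\<close>, whose last term
  elastic consistency controls, while \<open>L\<alpha> \<le> 1/4\<close> absorbs \<open>\<parallel>\<nabla>f(v\<^sub>t)\<parallel>\<^sup>2\<close> into the quadratic
  term. Hence \<open>\<alpha>/2 \<bbbE>\<parallel>\<nabla>f(x\<^sub>t)\<parallel>\<^sup>2 \<le> \<bbbE>f(x\<^sub>t) - \<bbbE>f(x\<^sub>t\<^sub>+\<^sub>1) + \<alpha>\<^sup>3L\<^sup>2B\<^sup>2/2 + 2L\<alpha>\<^sup>2\<sigma>\<^sup>2\<close>; summing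
  over \<open>t < T\<close> and bounding the minimum by the average gives the rate. All the expectations
  exist because \<open>\<parallel>x\<^sub>t - x\<^sub>0\<parallel>\<close> stays square integrable along the iteration.\<close>

lemma Lipschitz_gradient_upper_bound:
  fixes f :: "'d::euclidean_space \<Rightarrow> real" and g :: "'d \<Rightarrow> 'd"
  assumes grad: "\<And>y. GDERIV f y :> g y"
    and Lip: "\<And>y z. norm (g y - g z) \<le> L * norm (y - z)" and "L \<ge> 0"
  shows "f (y + d) \<le> f y + g y \<bullet> d + L * (norm d)\<^sup>2"
proof -
  define \<phi> where "\<phi> s = f (y + s *\<^sub>R d)" for s :: real
  have \<phi>_deriv: "DERIV \<phi> s :> d \<bullet> g (y + s *\<^sub>R d)" for s
  proof -
    have "((\<lambda>s. y + s *\<^sub>R d) has_derivative (\<lambda>h. h *\<^sub>R d)) (at s)"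
      by (auto intro!: derivative_eq_intros)
    moreover have "(f has_derivative (\<lambda>h. h \<bullet> g (y + s *\<^sub>R d))) (at (y + s *\<^sub>R d))"
      using grad[of "y + s *\<^sub>R d"] by (simp add: gderiv_def)
    ultimately have "(\<phi> has_derivative (\<lambda>h. (h *\<^sub>R d) \<bullet> g (y + s *\<^sub>R d))) (at s)"
      unfolding \<phi>_def by (rule has_derivative_compose)
    then show ?thesis
      by (simp add: has_field_derivative_def mult_commute_abs)
  qed
  obtain c where c: "0 < c" "c < 1" "\<phi> 1 - \<phi> 0 = d \<bullet> g (y + c *\<^sub>R d)"
    using MVT2[of 0 1 \<phi> "\<lambda>s. d \<bullet> g (y + s *\<^sub>R d)"] \<phi>_deriv by auto
  have "d \<bullet> (g (y + c *\<^sub>R d) - g y) \<le> norm d * norm (g (y + c *\<^sub>R d) - g y)"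
    by (rule norm_cauchy_schwarz)
  also have "\<dots> \<le> norm d * (L * (c * norm d))"
    using Lip[of "y + c *\<^sub>R d" y] c by (simp add: mult_left_mono)
  also have "\<dots> \<le> norm d * (L * norm d)"
    using c \<open>L \<ge> 0\<close> by (intro mult_left_mono) (auto intro: mult_left_le_one_le)
  finally show ?thesis
    using c unfolding \<phi>_def by (simp add: inner_diff_right inner_commute power2_eq_square mult.left_commute)
qed

lemma sgd_step_upper_bound:
  fixes f :: "'d::euclidean_space \<Rightarrow> real" and g :: "'d \<Rightarrow> 'd"
  assumes grad: "\<And>y. GDERIV f y :> g y"
    and Lip: "\<And>y z. norm (g y - g z) \<le> L * norm (y - z)" and "L \<ge> 0"
    and "\<alpha> > 0" and "L * \<alpha> \<le> 1/4"
  shows "f (y - \<alpha> *\<^sub>R G) + \<alpha> / 2 * (norm (g y))\<^sup>2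
    \<le> f y - \<alpha> * (g y \<bullet> (G - g v)) + \<alpha> / 2 * L\<^sup>2 * (norm (y - v))\<^sup>2
      + 2 * L * \<alpha>\<^sup>2 * (norm (G - g v))\<^sup>2"
proof -
  define a b e where "a = g y" and "b = g v" and "e = G - g v"
  have descent: "f (y - \<alpha> *\<^sub>R G)
      \<le> f y - \<alpha> * (a \<bullet> b) - \<alpha> * (a \<bullet> e) + L * \<alpha>\<^sup>2 * (norm (b + e))\<^sup>2"
    using Lipschitz_gradient_upper_bound[OF grad Lip \<open>L \<ge> 0\<close>, of y "- \<alpha> *\<^sub>R G"] \<open>\<alpha> > 0\<close>
    by (simp add: a_def b_def e_def inner_diff_right power_mult_distrib right_diff_distrib)
  have "(norm (b + e))\<^sup>2 \<le> 2 * (norm b)\<^sup>2 + 2 * (norm e)\<^sup>2"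
    using norm_triangle_ineq[of b e] sum_squares_bound[of "norm b" "norm e"]
    by (smt (verit) norm_ge_zero power2_sum power_mono)
  then have "L * \<alpha>\<^sup>2 * (norm (b + e))\<^sup>2 \<le> L * \<alpha>\<^sup>2 * (2 * (norm b)\<^sup>2 + 2 * (norm e)\<^sup>2)"
    using \<open>L \<ge> 0\<close> by (intro mult_left_mono) auto
  then have quadratic:
    "L * \<alpha>\<^sup>2 * (norm (b + e))\<^sup>2 \<le> 2 * L * \<alpha>\<^sup>2 * (norm b)\<^sup>2 + 2 * L * \<alpha>\<^sup>2 * (norm e)\<^sup>2"
    by (simp add: algebra_simps)
  have "2 * (a \<bullet> b) = (norm a)\<^sup>2 + (norm b)\<^sup>2 - (norm (a - b))\<^sup>2"
    by (simp add: power2_norm_eq_inner inner_diff_left inner_diff_right inner_commute)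
  then have polarization: "\<alpha> * (a \<bullet> b) = \<alpha> / 2 * (norm a)\<^sup>2 + \<alpha> / 2 * (norm b)\<^sup>2 - \<alpha> / 2 * (norm (a - b))\<^sup>2"
    by algebra
  have "(norm (a - b))\<^sup>2 \<le> L\<^sup>2 * (norm (y - v))\<^sup>2"
    using Lip[of y v] unfolding a_def b_def by (metis norm_ge_zero power_mono power_mult_distrib)
  then have lipschitz: "\<alpha> / 2 * (norm (a - b))\<^sup>2 \<le> \<alpha> / 2 * L\<^sup>2 * (norm (y - v))\<^sup>2"
    using \<open>\<alpha> > 0\<close> by (simp add: mult.assoc)
  have absorbed: "2 * L * \<alpha>\<^sup>2 * (norm b)\<^sup>2 \<le> \<alpha> / 2 * (norm b)\<^sup>2"
    using \<open>L * \<alpha> \<le> 1/4\<close> \<open>\<alpha> > 0\<close> by (intro mult_right_mono) (auto simp: power2_eq_square)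
  show ?thesis
    using descent quadratic polarization lipschitz absorbed
    unfolding a_def [symmetric] e_def [symmetric] by linarith
qed

definition square_integrable :: "'a measure \<Rightarrow> ('a \<Rightarrow> real) \<Rightarrow> bool" where
  "square_integrable M u \<longleftrightarrow> u \<in> borel_measurable M \<and> integrable M (\<lambda>\<omega>. (u \<omega>)\<^sup>2)"

lemma square_integrable_dominated:
  assumes "square_integrable M u" and [measurable]: "h \<in> borel_measurable M"
    and "\<And>\<omega>. \<omega> \<in> space M \<Longrightarrow> \<bar>h \<omega>\<bar> \<le> u \<omega>"
  shows "square_integrable M h"
proof -
  have "integrable M (\<lambda>\<omega>. (h \<omega>)\<^sup>2)"
  proof (rule Bochner_Integration.integrable_bound)
    show "integrable M (\<lambda>\<omega>. (u \<omega>)\<^sup>2)"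
      using assms(1) by (simp add: square_integrable_def)
    show "AE \<omega> in M. norm ((h \<omega>)\<^sup>2) \<le> norm ((u \<omega>)\<^sup>2)"
    proof (rule AE_I2)
      fix \<omega> assume "\<omega> \<in> space M"
      then have "\<bar>h \<omega>\<bar> \<le> \<bar>u \<omega>\<bar>"
        using assms(3) abs_ge_self order_trans by blast
      then show "norm ((h \<omega>)\<^sup>2) \<le> norm ((u \<omega>)\<^sup>2)"
        by (simp add: abs_le_square_iff)
    qed
  qed measurable
  then show ?thesis
    by (simp add: square_integrable_def)
qed

lemma square_integrable_add:
  assumes u: "square_integrable M u" and w: "square_integrable M w"
  shows "square_integrable M (\<lambda>\<omega>. u \<omega> + w \<omega>)"
proof -
  have [measurable]: "u \<in> borel_measurable M" "w \<in> borel_measurable M"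
    using u w by (auto simp: square_integrable_def)
  have "integrable M (\<lambda>\<omega>. (u \<omega> + w \<omega>)\<^sup>2)"
  proof (rule Bochner_Integration.integrable_bound)
    show "integrable M (\<lambda>\<omega>. 2 * (u \<omega>)\<^sup>2 + 2 * (w \<omega>)\<^sup>2)"
      using u w by (simp add: square_integrable_def)
    show "AE \<omega> in M. norm ((u \<omega> + w \<omega>)\<^sup>2) \<le> norm (2 * (u \<omega>)\<^sup>2 + 2 * (w \<omega>)\<^sup>2)"
    proof (rule AE_I2)
      fix \<omega>
      have "(u \<omega> + w \<omega>)\<^sup>2 \<le> 2 * (u \<omega>)\<^sup>2 + 2 * (w \<omega>)\<^sup>2"
        using power2_sum[of "u \<omega>" "w \<omega>"] sum_squares_bound[of "u \<omega>" "w \<omega>"] by linarith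
      then show "norm ((u \<omega> + w \<omega>)\<^sup>2) \<le> norm (2 * (u \<omega>)\<^sup>2 + 2 * (w \<omega>)\<^sup>2)"
        by simp
    qed
  qed measurable
  then show ?thesis
    by (simp add: square_integrable_def)
qed

lemma square_integrable_cmult:
  "square_integrable M u \<Longrightarrow> square_integrable M (\<lambda>\<omega>. c * u \<omega>)"
  by (auto simp: square_integrable_def power_mult_distrib)

lemma (in finite_measure) square_integrable_const: "square_integrable M (\<lambda>_. c)"
  by (simp add: square_integrable_def)

lemma integrable_dominated_by_product:
  assumes "square_integrable M u" "square_integrable M w" "h \<in> borel_measurable M"
    and "\<And>\<omega>. \<omega> \<in> space M \<Longrightarrow> \<bar>h \<omega>\<bar> \<le> u \<omega> * w \<omega>"
  shows "integrable M h"
proof (rule Bochner_Integration.integrable_bound)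
  show "integrable M (\<lambda>\<omega>. (u \<omega>)\<^sup>2 + (w \<omega>)\<^sup>2)"
    using assms(1,2) by (simp add: square_integrable_def)
  show "AE \<omega> in M. norm (h \<omega>) \<le> norm ((u \<omega>)\<^sup>2 + (w \<omega>)\<^sup>2)"
  proof (rule AE_I2)
    fix \<omega> assume "\<omega> \<in> space M"
    then have "\<bar>h \<omega>\<bar> \<le> (u \<omega>)\<^sup>2 + (w \<omega>)\<^sup>2"
      using assms(4) sum_squares_bound[of "u \<omega>" "w \<omega>"] zero_le_power2[of "u \<omega>"]
        zero_le_power2[of "w \<omega>"] by fastforce
    then show "norm (h \<omega>) \<le> norm ((u \<omega>)\<^sup>2 + (w \<omega>)\<^sup>2)"
      by simp
  qed
qed fact

lemma integrable_integral_le_of_nn_integral_le: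
  fixes h :: "'a \<Rightarrow> real"
  assumes [measurable]: "h \<in> borel_measurable M" and nonneg: "\<And>\<omega>. h \<omega> \<ge> 0"
    and le: "(\<integral>\<^sup>+ \<omega>. ennreal (h \<omega>) \<partial>M) \<le> ennreal c" and "c \<ge> 0"
  shows "integrable M h" "(\<integral>\<omega>. h \<omega> \<partial>M) \<le> c"
proof -
  show h_int: "integrable M h"
    using le nonneg by (intro integrableI_nonneg) (auto simp: le_less_trans top.not_eq_extremum)
  have "ennreal (\<integral>\<omega>. h \<omega> \<partial>M) \<le> ennreal c"
    using nn_integral_eq_integral[OF h_int] nonneg le by simp
  with \<open>c \<ge> 0\<close> show "(\<integral>\<omega>. h \<omega> \<partial>M) \<le> c"
    by (simp add: ennreal_le_iff)
qed

lemma (in sigma_finite_subalgebra) nn_integral_le_of_nn_cond_exp_le: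
  assumes "h \<in> borel_measurable M" and "AE \<omega> in M. nn_cond_exp M F h \<omega> \<le> c"
  shows "(\<integral>\<^sup>+ \<omega>. h \<omega> \<partial>M) \<le> c * emeasure M (space M)"
proof -
  have "(\<integral>\<^sup>+ \<omega>. h \<omega> \<partial>M) = (\<integral>\<^sup>+ \<omega>. 1 * nn_cond_exp M F h \<omega> \<partial>M)"
    using nn_cond_exp_intg[of "\<lambda>_. 1" h] assms(1) by simp
  also have "\<dots> \<le> (\<integral>\<^sup>+ \<omega>. c \<partial>M)"
    using assms(2) by (intro nn_integral_mono_AE) simp
  finally show ?thesis
    by simp
qed

lemma (in sigma_finite_subalgebra) integral_inner_diff_cond_exp_eq_0:
  fixes a Y Z :: "'a \<Rightarrow> 'd::euclidean_space"
  assumes [measurable]: "a \<in> borel_measurable F" "Y \<in> borel_measurable M" "Z \<in> borel_measurable M"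
    and a: "square_integrable M (\<lambda>\<omega>. norm (a \<omega>))"
    and Y: "square_integrable M (\<lambda>\<omega>. norm (Y \<omega>))"
    and Z: "square_integrable M (\<lambda>\<omega>. norm (Z \<omega>))"
    and unbiased: "\<And>i. i \<in> Basis \<Longrightarrow> AE \<omega> in M. real_cond_exp M F (\<lambda>\<omega>. Y \<omega> \<bullet> i) \<omega> = Z \<omega> \<bullet> i"
  shows "(\<integral>\<omega>. a \<omega> \<bullet> (Y \<omega> - Z \<omega>) \<partial>M) = 0"
proof -
  have [measurable]: "a \<in> borel_measurable M"
    using measurable_from_subalg[OF subalg] assms(1) .
  have component_int: "integrable M (\<lambda>\<omega>. (a \<omega> \<bullet> i) * (W \<omega> \<bullet> i))"
    if "i \<in> Basis" "W \<in> borel_measurable M" "square_integrable M (\<lambda>\<omega>. norm (W \<omega>))" for i W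
    by (rule integrable_dominated_by_product[OF a that(3)])
      (use that in \<open>auto simp: abs_mult intro!: mult_mono Basis_le_norm\<close>)
  have component_eq: "(\<integral>\<omega>. (a \<omega> \<bullet> i) * (Y \<omega> \<bullet> i) \<partial>M) = (\<integral>\<omega>. (a \<omega> \<bullet> i) * (Z \<omega> \<bullet> i) \<partial>M)"
    if i: "i \<in> Basis" for i
  proof -
    have "(\<integral>\<omega>. (a \<omega> \<bullet> i) * (Y \<omega> \<bullet> i) \<partial>M)
        = (\<integral>\<omega>. (a \<omega> \<bullet> i) * real_cond_exp M F (\<lambda>\<omega>. Y \<omega> \<bullet> i) \<omega> \<partial>M)"
      by (rule real_cond_exp_intg(2)[symmetric, OF component_int[OF i assms(2) Y]]) measurable
    also have "\<dots> = (\<integral>\<omega>. (a \<omega> \<bullet> i) * (Z \<omega> \<bullet> i) \<partial>M)"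
      using unbiased[OF i] by (intro integral_cong_AE) (auto elim!: eventually_mono)
    finally show ?thesis .
  qed
  have "a \<omega> \<bullet> (Y \<omega> - Z \<omega>) = (\<Sum>i\<in>Basis. (a \<omega> \<bullet> i) * (Y \<omega> \<bullet> i) - (a \<omega> \<bullet> i) * (Z \<omega> \<bullet> i))" for \<omega>
    by (subst euclidean_inner) (simp add: inner_diff_left right_diff_distrib)
  then have "(\<integral>\<omega>. a \<omega> \<bullet> (Y \<omega> - Z \<omega>) \<partial>M)
      = (\<integral>\<omega>. (\<Sum>i\<in>Basis. (a \<omega> \<bullet> i) * (Y \<omega> \<bullet> i) - (a \<omega> \<bullet> i) * (Z \<omega> \<bullet> i)) \<partial>M)"
    by simp
  also have "\<dots> = (\<Sum>i\<in>Basis. (\<integral>\<omega>. (a \<omega> \<bullet> i) * (Y \<omega> \<bullet> i) \<partial>M) - (\<integral>\<omega>. (a \<omega> \<bullet> i) * (Z \<omega> \<bullet> i) \<partial>M))"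
    using component_int Y Z by (simp add: Bochner_Integration.integral_sum)
  also have "\<dots> = 0"
    using component_eq by simp
  finally show ?thesis .
qed

locale elastic_sgd = prob_space M
  for M :: "'a measure" and F :: "nat \<Rightarrow> 'a measure"
    and f :: "'d::euclidean_space \<Rightarrow> real" and g :: "'d \<Rightarrow> 'd"
    and L \<alpha> B \<sigma> :: real
    and x :: "nat \<Rightarrow> 'a \<Rightarrow> 'd" and x0 :: 'd and v :: "nat \<Rightarrow> 'a \<Rightarrow> 'd"
    and G :: "nat \<Rightarrow> 'a \<Rightarrow> 'd" +
  assumes filtration: "\<And>t. sigma_finite_subalgebra M (F t)"
    and grad: "\<And>y. GDERIV f y :> g y"
    and Lip: "\<And>y z. norm (g y - g z) \<le> L * norm (y - z)"
    and L_nonneg: "L \<ge> 0"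
    and step_pos: "\<alpha> > 0"
    and step_small: "L * \<alpha> \<le> 1/4"
    and bdd: "bdd_below (range f)"
    and x_init: "x 0 = (\<lambda>\<omega>. x0)"
    and x_adapted: "\<And>t. x t \<in> borel_measurable (F t)"
    and v_adapted: "\<And>t. v t \<in> borel_measurable (F t)"
    and G_measurable: "\<And>t. G t \<in> borel_measurable M"
    and unbiased: "\<And>t i. i \<in> Basis \<Longrightarrow>
        AE \<omega> in M. real_cond_exp M (F t) (\<lambda>\<omega>. G t \<omega> \<bullet> i) \<omega> = g (v t \<omega>) \<bullet> i"
    and variance: "\<And>t. AE \<omega> in M.
        nn_cond_exp M (F t) (\<lambda>\<omega>. ennreal ((norm (G t \<omega> - g (v t \<omega>)))\<^sup>2)) \<omega> \<le> ennreal (\<sigma>\<^sup>2)"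
    and update: "\<And>t. x (Suc t) = (\<lambda>\<omega>. x t \<omega> - \<alpha> *\<^sub>R G t \<omega>)"
    and elastic: "\<And>t. (\<integral>\<^sup>+ \<omega>. ennreal ((norm (x t \<omega> - v t \<omega>))\<^sup>2) \<partial>M) \<le> ennreal (\<alpha>\<^sup>2 * B\<^sup>2)"
begin

lemma x_measurable [measurable]: "x t \<in> borel_measurable M"
  using measurable_from_subalg[OF sigma_finite_subalgebra.subalg[OF filtration] x_adapted] .

lemma v_measurable [measurable]: "v t \<in> borel_measurable M"
  using measurable_from_subalg[OF sigma_finite_subalgebra.subalg[OF filtration] v_adapted] .

declare G_measurable [measurable]

lemma g_measurable [measurable]: "g \<in> borel_measurable borel"
proof -
  have "L-lipschitz_on UNIV g"
    by (rule lipschitz_onI) (auto simp: dist_norm Lip L_nonneg)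
  then show ?thesis
    by (intro borel_measurable_continuous_onI lipschitz_on_continuous_on)
qed

lemma f_measurable [measurable]: "f \<in> borel_measurable borel"
  using grad by (intro borel_measurable_continuous_onI continuous_at_imp_continuous_on)
    (auto simp: gderiv_def intro: has_derivative_continuous)

lemma consistency_error_square_integrable: "square_integrable M (\<lambda>\<omega>. norm (x t \<omega> - v t \<omega>))"
  and consistency_error_bound: "(\<integral>\<omega>. (norm (x t \<omega> - v t \<omega>))\<^sup>2 \<partial>M) \<le> \<alpha>\<^sup>2 * B\<^sup>2"
  using integrable_integral_le_of_nn_integral_le[OF _ _ elastic[of t]]
  by (auto simp: square_integrable_def)

lemma noise_square_integrable: "square_integrable M (\<lambda>\<omega>. norm (G t \<omega> - g (v t \<omega>)))"
  and noise_variance_bound: "(\<integral>\<omega>. (norm (G t \<omega> - g (v t \<omega>)))\<^sup>2 \<partial>M) \<le> \<sigma>\<^sup>2"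
proof -
  have "(\<integral>\<^sup>+ \<omega>. ennreal ((norm (G t \<omega> - g (v t \<omega>)))\<^sup>2) \<partial>M) \<le> ennreal (\<sigma>\<^sup>2) * emeasure M (space M)"
    by (rule sigma_finite_subalgebra.nn_integral_le_of_nn_cond_exp_le[OF filtration _ variance])
      measurable
  then have "(\<integral>\<^sup>+ \<omega>. ennreal ((norm (G t \<omega> - g (v t \<omega>)))\<^sup>2) \<partial>M) \<le> ennreal (\<sigma>\<^sup>2)"
    by (simp add: emeasure_space_1)
  from integrable_integral_le_of_nn_integral_le[OF _ _ this]
  show "square_integrable M (\<lambda>\<omega>. norm (G t \<omega> - g (v t \<omega>)))"
    and "(\<integral>\<omega>. (norm (G t \<omega> - g (v t \<omega>)))\<^sup>2 \<partial>M) \<le> \<sigma>\<^sup>2"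
    by (auto simp: square_integrable_def)
qed

lemma norm_gradient_le: "norm (g y) \<le> norm (g x0) + L * norm (y - x0)"
  using Lip[of y x0] norm_triangle_ineq2[of "g y" "g x0"] by linarith

lemma norm_gradient_view_le:
  "norm (g (v t \<omega>)) \<le> norm (g x0) + L * norm (x t \<omega> - v t \<omega>) + L * norm (x t \<omega> - x0)"
proof -
  have "norm (v t \<omega> - x0) \<le> norm (x t \<omega> - v t \<omega>) + norm (x t \<omega> - x0)"
    using norm_triangle_ineq4[of "x t \<omega> - x0" "x t \<omega> - v t \<omega>"] by (simp add: algebra_simps)
  then show ?thesis
    using norm_gradient_le[of "v t \<omega>"] L_nonneg by (smt (verit) distrib_left mult_left_mono)
qed

lemma gradient_view_square_integrable_if:
  assumes "square_integrable M (\<lambda>\<omega>. norm (x t \<omega> - x0))"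
  shows "square_integrable M (\<lambda>\<omega>. norm (g (v t \<omega>)))"
proof (rule square_integrable_dominated)
  show "square_integrable M
      (\<lambda>\<omega>. norm (g x0) + L * norm (x t \<omega> - v t \<omega>) + L * norm (x t \<omega> - x0))"
    by (intro square_integrable_add square_integrable_cmult square_integrable_const assms
        consistency_error_square_integrable)
qed (use norm_gradient_view_le in auto)

lemma G_square_integrable_if:
  assumes "square_integrable M (\<lambda>\<omega>. norm (x t \<omega> - x0))"
  shows "square_integrable M (\<lambda>\<omega>. norm (G t \<omega>))"
proof (rule square_integrable_dominated)
  show "square_integrable M (\<lambda>\<omega>. norm (G t \<omega> - g (v t \<omega>)) + norm (g (v t \<omega>)))"
    by (intro square_integrable_add noise_square_integrable gradient_view_square_integrable_if assms)
  show "\<bar>norm (G t \<omega>)\<bar> \<le> norm (G t \<omega> - g (v t \<omega>)) + norm (g (v t \<omega>))" for \<omega>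
    using norm_triangle_ineq[of "G t \<omega> - g (v t \<omega>)" "g (v t \<omega>)"] by simp
qed measurable

lemma distance_to_start_square_integrable: "square_integrable M (\<lambda>\<omega>. norm (x t \<omega> - x0))"
proof (induction t)
  case 0
  then show ?case
    by (simp add: x_init square_integrable_const)
next
  case (Suc t)
  show ?case
  proof (rule square_integrable_dominated)
    show "square_integrable M (\<lambda>\<omega>. norm (x t \<omega> - x0) + \<alpha> * norm (G t \<omega>))"
      by (intro square_integrable_add square_integrable_cmult G_square_integrable_if Suc.IH)
    show "\<bar>norm (x (Suc t) \<omega> - x0)\<bar> \<le> norm (x t \<omega> - x0) + \<alpha> * norm (G t \<omega>)" for \<omega>
      using norm_triangle_ineq4[of "x t \<omega> - x0" "\<alpha> *\<^sub>R G t \<omega>"] step_pos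
      by (simp add: update algebra_simps)
  qed measurable
qed

lemma gradient_square_integrable: "square_integrable M (\<lambda>\<omega>. norm (g (x t \<omega>)))"
proof (rule square_integrable_dominated)
  show "square_integrable M (\<lambda>\<omega>. norm (g x0) + L * norm (x t \<omega> - x0))"
    by (intro square_integrable_add square_integrable_cmult square_integrable_const
        distance_to_start_square_integrable)
qed (use norm_gradient_le in auto)

lemma integrable_objective: "integrable M (\<lambda>\<omega>. f (x t \<omega>))"
proof (rule Bochner_Integration.integrable_bound)
  let ?r = "\<lambda>\<omega>. norm (x t \<omega> - x0)"
  let ?U = "\<lambda>\<omega>. \<bar>Inf (range f)\<bar> + \<bar>f x0\<bar> + norm (g x0) * ?r \<omega> + L * (?r \<omega>)\<^sup>2"
  show "integrable M ?U"
    using square_integrable_imp_integrable[of ?r] distance_to_start_square_integrable[of t]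
    by (simp add: square_integrable_def)
  show "AE \<omega> in M. norm (f (x t \<omega>)) \<le> norm (?U \<omega>)"
  proof (rule AE_I2)
    fix \<omega>
    have "f (x t \<omega>) \<le> f x0 + g x0 \<bullet> (x t \<omega> - x0) + L * (?r \<omega>)\<^sup>2"
      using Lipschitz_gradient_upper_bound[OF grad Lip L_nonneg, of x0 "x t \<omega> - x0"] by simp
    moreover have "g x0 \<bullet> (x t \<omega> - x0) \<le> norm (g x0) * ?r \<omega>"
      by (rule norm_cauchy_schwarz)
    moreover have "Inf (range f) \<le> f (x t \<omega>)"
      using bdd by (simp add: cInf_lower)
    moreover have "0 \<le> norm (g x0) * ?r \<omega>" "0 \<le> L * (?r \<omega>)\<^sup>2"
      using L_nonneg by auto
    ultimately have "\<bar>f (x t \<omega>)\<bar> \<le> ?U \<omega>"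
      by linarith
    then show "norm (f (x t \<omega>)) \<le> norm (?U \<omega>)"
      by simp
  qed
qed measurable

lemma integral_inner_noise_eq_0:
  "(\<integral>\<omega>. g (x t \<omega>) \<bullet> (G t \<omega> - g (v t \<omega>)) \<partial>M) = 0"
proof (rule sigma_finite_subalgebra.integral_inner_diff_cond_exp_eq_0[OF filtration _ _ _
      gradient_square_integrable _ _ unbiased])
  show "(\<lambda>\<omega>. g (x t \<omega>)) \<in> borel_measurable (F t)"
    using measurable_compose[OF x_adapted g_measurable] .
  show "square_integrable M (\<lambda>\<omega>. norm (G t \<omega>))"
    by (intro G_square_integrable_if distance_to_start_square_integrable)
  show "square_integrable M (\<lambda>\<omega>. norm (g (v t \<omega>)))"
    by (intro gradient_view_square_integrable_if distance_to_start_square_integrable)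
  show "G t \<in> borel_measurable M" "(\<lambda>\<omega>. g (v t \<omega>)) \<in> borel_measurable M"
    by measurable
qed

lemma expected_descent:
  "(\<integral>\<omega>. f (x (Suc t) \<omega>) \<partial>M) + \<alpha> / 2 * (\<integral>\<omega>. (norm (g (x t \<omega>)))\<^sup>2 \<partial>M)
    \<le> (\<integral>\<omega>. f (x t \<omega>) \<partial>M) + \<alpha> ^ 3 * L\<^sup>2 * B\<^sup>2 / 2 + 2 * L * \<alpha>\<^sup>2 * \<sigma>\<^sup>2"
proof -
  let ?e = "\<lambda>\<omega>. G t \<omega> - g (v t \<omega>)"
  have pointwise: "f (x (Suc t) \<omega>) + \<alpha> / 2 * (norm (g (x t \<omega>)))\<^sup>2
      \<le> f (x t \<omega>) - \<alpha> * (g (x t \<omega>) \<bullet> ?e \<omega>) + \<alpha> / 2 * L\<^sup>2 * (norm (x t \<omega> - v t \<omega>))\<^sup>2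
        + 2 * L * \<alpha>\<^sup>2 * (norm (?e \<omega>))\<^sup>2" for \<omega>
    using sgd_step_upper_bound[OF grad Lip L_nonneg step_pos step_small] by (simp add: update)
  have inner_int: "integrable M (\<lambda>\<omega>. g (x t \<omega>) \<bullet> ?e \<omega>)"
    by (rule integrable_dominated_by_product[OF gradient_square_integrable noise_square_integrable])
      (auto intro: Cauchy_Schwarz_ineq2)
  have sq_int: "integrable M (\<lambda>\<omega>. (norm (g (x t \<omega>)))\<^sup>2)"
    "integrable M (\<lambda>\<omega>. (norm (x t \<omega> - v t \<omega>))\<^sup>2)" "integrable M (\<lambda>\<omega>. (norm (?e \<omega>))\<^sup>2)"
    using gradient_square_integrable consistency_error_square_integrable noise_square_integrable
    by (auto simp: square_integrable_def)
  have "(\<integral>\<omega>. f (x (Suc t) \<omega>) + \<alpha> / 2 * (norm (g (x t \<omega>)))\<^sup>2 \<partial>M)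
      \<le> (\<integral>\<omega>. f (x t \<omega>) - \<alpha> * (g (x t \<omega>) \<bullet> ?e \<omega>) + \<alpha> / 2 * L\<^sup>2 * (norm (x t \<omega> - v t \<omega>))\<^sup>2
        + 2 * L * \<alpha>\<^sup>2 * (norm (?e \<omega>))\<^sup>2 \<partial>M)"
    using integrable_objective inner_int sq_int by (intro integral_mono pointwise) auto
  then have "(\<integral>\<omega>. f (x (Suc t) \<omega>) \<partial>M) + \<alpha> / 2 * (\<integral>\<omega>. (norm (g (x t \<omega>)))\<^sup>2 \<partial>M)
      \<le> (\<integral>\<omega>. f (x t \<omega>) \<partial>M) + \<alpha> / 2 * L\<^sup>2 * (\<integral>\<omega>. (norm (x t \<omega> - v t \<omega>))\<^sup>2 \<partial>M)
        + 2 * L * \<alpha>\<^sup>2 * (\<integral>\<omega>. (norm (?e \<omega>))\<^sup>2 \<partial>M)"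
    using integrable_objective inner_int sq_int integral_inner_noise_eq_0 by simp
  moreover have "\<alpha> / 2 * L\<^sup>2 * (\<integral>\<omega>. (norm (x t \<omega> - v t \<omega>))\<^sup>2 \<partial>M) \<le> \<alpha> / 2 * L\<^sup>2 * (\<alpha>\<^sup>2 * B\<^sup>2)"
    using consistency_error_bound step_pos by (intro mult_left_mono) auto
  moreover have "2 * L * \<alpha>\<^sup>2 * (\<integral>\<omega>. (norm (?e \<omega>))\<^sup>2 \<partial>M) \<le> 2 * L * \<alpha>\<^sup>2 * \<sigma>\<^sup>2"
    using noise_variance_bound L_nonneg by (intro mult_left_mono) auto
  moreover have "\<alpha> / 2 * L\<^sup>2 * (\<alpha>\<^sup>2 * B\<^sup>2) = \<alpha> ^ 3 * L\<^sup>2 * B\<^sup>2 / 2"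
    by algebra
  ultimately show ?thesis
    by linarith
qed

lemma expected_descent_sum:
  "(\<integral>\<omega>. f (x n \<omega>) \<partial>M) + \<alpha> / 2 * (\<Sum>t<n. \<integral>\<omega>. (norm (g (x t \<omega>)))\<^sup>2 \<partial>M)
    \<le> f x0 + n * (\<alpha> ^ 3 * L\<^sup>2 * B\<^sup>2 / 2 + 2 * L * \<alpha>\<^sup>2 * \<sigma>\<^sup>2)"
proof (induction n)
  case 0
  then show ?case
    by (simp add: x_init prob_space)
next
  case (Suc n)
  define K where "K = \<alpha> ^ 3 * L\<^sup>2 * B\<^sup>2 / 2 + 2 * L * \<alpha>\<^sup>2 * \<sigma>\<^sup>2"
  have "\<alpha> / 2 * (\<Sum>t<Suc n. \<integral>\<omega>. (norm (g (x t \<omega>)))\<^sup>2 \<partial>M)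
      = \<alpha> / 2 * (\<Sum>t<n. \<integral>\<omega>. (norm (g (x t \<omega>)))\<^sup>2 \<partial>M) + \<alpha> / 2 * (\<integral>\<omega>. (norm (g (x n \<omega>)))\<^sup>2 \<partial>M)"
    by (simp add: distrib_left)
  moreover have "real (Suc n) * K = n * K + K"
    by (simp add: distrib_right)
  ultimately show ?case
    using Suc.IH expected_descent[of n] unfolding K_def by linarith
qed

lemma min_expected_sq_gradient_le:
  assumes "n > 0"
  shows "(MIN t\<in>{..<n}. \<integral>\<omega>. (norm (g (x t \<omega>)))\<^sup>2 \<partial>M)
    \<le> 2 * (f x0 - Inf (range f)) / (\<alpha> * n) + \<alpha>\<^sup>2 * L\<^sup>2 * B\<^sup>2 + 4 * L * \<alpha> * \<sigma>\<^sup>2"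
proof -
  define m where "m = (MIN t\<in>{..<n}. \<integral>\<omega>. (norm (g (x t \<omega>)))\<^sup>2 \<partial>M)"
  define K where "K = \<alpha> ^ 3 * L\<^sup>2 * B\<^sup>2 / 2 + 2 * L * \<alpha>\<^sup>2 * \<sigma>\<^sup>2"
  have "n * m \<le> (\<Sum>t<n. \<integral>\<omega>. (norm (g (x t \<omega>)))\<^sup>2 \<partial>M)"
    using sum_bounded_below[of "{..<n}" m "\<lambda>t. \<integral>\<omega>. (norm (g (x t \<omega>)))\<^sup>2 \<partial>M"]
    by (simp add: m_def)
  then have "\<alpha> / 2 * (n * m) \<le> \<alpha> / 2 * (\<Sum>t<n. \<integral>\<omega>. (norm (g (x t \<omega>)))\<^sup>2 \<partial>M)"
    using step_pos by (intro mult_left_mono) auto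
  moreover have "Inf (range f) \<le> (\<integral>\<omega>. f (x n \<omega>) \<partial>M)"
    using bdd by (intro integral_ge_const integrable_objective) (simp add: cInf_lower)
  ultimately have "\<alpha> / 2 * (n * m) \<le> f x0 - Inf (range f) + n * K"
    using expected_descent_sum[of n] unfolding K_def by linarith
  then have "m \<le> 2 * (f x0 - Inf (range f) + n * K) / (\<alpha> * n)"
    using step_pos assms by (simp add: field_simps)
  also have "\<dots> = 2 * (f x0 - Inf (range f)) / (\<alpha> * n) + \<alpha>\<^sup>2 * L\<^sup>2 * B\<^sup>2 + 4 * L * \<alpha> * \<sigma>\<^sup>2"
    using step_pos assms by (simp add: K_def field_simps power2_eq_square power3_eq_cube)
  finally show ?thesis
    unfolding m_def .
qed

end

lemma inverse_sqrt_step_small: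
  fixes L :: real
  assumes "L \<ge> 0" and "36 * L\<^sup>2 \<le> real T"
  shows "L * (1 / sqrt (real T)) \<le> 1/4"
proof -
  have "6 * L \<le> sqrt (real T)"
    using real_sqrt_le_mono[OF assms(2)] assms(1) by (simp add: real_sqrt_mult)
  then show ?thesis
    using assms(1) by (cases "T = 0") (auto simp: field_simps)
qed

lemma inverse_sqrt_step_rate_le:
  fixes L B \<sigma> D :: real
  assumes "T > 0" and "D \<ge> 0" and "L \<ge> 0"
  shows "2 * D / (1 / sqrt (real T) * T) + (1 / sqrt (real T))\<^sup>2 * L\<^sup>2 * B\<^sup>2
      + 4 * L * (1 / sqrt (real T)) * \<sigma>\<^sup>2
    \<le> 4 * D / sqrt (real T) + 2 * B\<^sup>2 * L\<^sup>2 / real T + 6 * L * \<sigma>\<^sup>2 / sqrt (real T)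
      + 6 * L ^ 3 * B\<^sup>2 / (real T * sqrt (real T))"
proof -
  define s where "s = sqrt (real T)"
  have s: "s > 0" "real T = s\<^sup>2"
    using assms(1) by (auto simp: s_def)
  have "2 * D / (1 / s * s\<^sup>2) + (1 / s)\<^sup>2 * L\<^sup>2 * B\<^sup>2 + 4 * L * (1 / s) * \<sigma>\<^sup>2
      = 2 * D / s + L\<^sup>2 * B\<^sup>2 / s\<^sup>2 + 4 * L * \<sigma>\<^sup>2 / s"
    using s(1) by (simp add: field_simps power2_eq_square)
  moreover have "2 * D / s \<le> 4 * D / s" "L\<^sup>2 * B\<^sup>2 / s\<^sup>2 \<le> 2 * B\<^sup>2 * L\<^sup>2 / s\<^sup>2"
    "4 * L * \<sigma>\<^sup>2 / s \<le> 6 * L * \<sigma>\<^sup>2 / s" "0 \<le> 6 * L ^ 3 * B\<^sup>2 / (s\<^sup>2 * s)"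
    using assms(2,3) s(1) by (auto intro!: divide_right_mono)
  ultimately show ?thesis
    unfolding s_def [symmetric] unfolding s(2) by linarith
qed

theorem theorem1:
  fixes M :: "'a measure" and F :: "nat \<Rightarrow> 'a measure"
    and f :: "'d::euclidean_space \<Rightarrow> real" and g :: "'d \<Rightarrow> 'd"
    and L B \<sigma> :: real and T :: nat
    and x :: "nat \<Rightarrow> 'a \<Rightarrow> 'd" and x0 :: 'd
    and sched :: "nat \<Rightarrow> 'p" and V :: "nat \<Rightarrow> 'p \<Rightarrow> 'a \<Rightarrow> 'd"
    and G :: "nat \<Rightarrow> 'a \<Rightarrow> 'd"
  assumes prob: "prob_space M"
    and filt_sub: "\<And>t. sigma_finite_subalgebra M (F t)"
    and filt_mono: "\<And>s t. s \<le> t \<Longrightarrow> sets (F s) \<subseteq> sets (F t)"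
    and grad: "\<And>y. GDERIV f y :> g y"
    and Lpos: "L > 0"
    and Lip: "\<And>y z. norm (g y - g z) \<le> L * norm (y - z)"
    and bdd: "bdd_below (range f)"
    and T_ge: "real T \<ge> 36 * L\<^sup>2"
    and x_init: "x 0 = (\<lambda>\<omega>. x0)"
    and x_meas: "\<And>t. x t \<in> borel_measurable (F t)"
    and V_meas: "\<And>t. V t (sched t) \<in> borel_measurable (F t)"
    and G_meas: "\<And>t. G t \<in> borel_measurable (F (Suc t))"
    and G_int: "\<And>t. integrable M (G t)"
    and unbiased: "\<And>t b. b \<in> Basis \<Longrightarrow>
        AE \<omega> in M. real_cond_exp M (F t) (\<lambda>\<omega>. G t \<omega> \<bullet> b) \<omega> = g (V t (sched t) \<omega>) \<bullet> b"
    and variance: "\<And>t. AE \<omega> in M.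
        nn_cond_exp M (F t) (\<lambda>\<omega>. ennreal ((norm (G t \<omega> - g (V t (sched t) \<omega>)))\<^sup>2)) \<omega>
          \<le> ennreal (\<sigma>\<^sup>2)"
    and update: "\<And>t. x (Suc t) = (\<lambda>\<omega>. x t \<omega> - (1 / sqrt (real T)) *\<^sub>R G t \<omega>)"
    and Bpos: "B > 0"
    and elastic: "\<And>t. (\<integral>\<^sup>+ \<omega>. ennreal ((norm (x t \<omega> - V t (sched t) \<omega>))\<^sup>2) \<partial>M)
        \<le> ennreal ((1 / sqrt (real T))\<^sup>2 * B\<^sup>2)"
  shows "(MIN t\<in>{..<T}. \<integral>\<omega>. (norm (g (x t \<omega>)))\<^sup>2 \<partial>M)
     \<le> 4 * (f x0 - Inf (range f)) / sqrt (real T) + 2 * B\<^sup>2 * L\<^sup>2 / real T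
       + 6 * L * \<sigma>\<^sup>2 / sqrt (real T) + 6 * L ^ 3 * B\<^sup>2 / (real T * sqrt (real T))"
proof -
  have "0 < real T"
    using Lpos by (intro order_less_le_trans[OF _ T_ge]) simp
  then have "T > 0"
    by simp
  have G_measurable: "G t \<in> borel_measurable M" for t
    using measurable_from_subalg[OF sigma_finite_subalgebra.subalg[OF filt_sub] G_meas] .
  interpret elastic_sgd M F f g L "1 / sqrt (real T)" B \<sigma> x x0 "\<lambda>t. V t (sched t)" G
    using prob filt_sub grad Lip Lpos \<open>T > 0\<close> inverse_sqrt_step_small[OF _ T_ge] bdd x_init
      x_meas V_meas G_measurable unbiased variance update elastic
    by (intro elastic_sgd.intro elastic_sgd_axioms.intro) auto
  have "0 \<le> f x0 - Inf (range f)"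
    using bdd by (simp add: cInf_lower)
  from inverse_sqrt_step_rate_le[OF \<open>T > 0\<close> this less_imp_le[OF Lpos]]
  show ?thesis
    by (rule order_trans[OF min_expected_sq_gradient_le[OF \<open>T > 0\<close>]])
qed

end
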